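(* In any $\delta$-ring $A$, for every $n\ge1$ and $f\in A$, \[ \delta_n(f)=\sum_{k=0}^{n-1}\theta_{n-k}(\delta_k(f)). \]
   Context: A $\delta$-ring is a commutative ring with $\delta$ such that $\phi(x)=x^p+p\delta(x)$ is a ring endomorphism. The operations $\delta_k$ are the Witt components of the map $A\to W(A)$ encoding the $\delta$-structure, characterized by $\phi^n(f)=\sum_{k=0}^np^k\delta_k(f)^{p^{n-k}}$ for all $n$ (so $\delta_0=\mathrm{id}$, $\delta_1=\delta$). The operations $\theta_n$ ($n\ge1$) are the natural operations characterized by $\phi(f^{p^{n-1}})=f^{p^n}+p^n\theta_n(f)$. *)

theory Defs
  imports Main "HOL-Library.Poly_Mapping" "HOL-Computational_Algebra.Primes"
begin

text \<open>Delta-rings (for a fixed prime p), in the standard (Joyal / Bhatt--Scholze) axiomatisation,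
  valid for arbitrary commutative rings: these axioms say exactly that
  phi(x) = x^p + p * delta(x) is a ring endomorphism, with the division by p in the additivity
  rule performed on the integer coefficients (p divides (p choose i) for 0 < i < p).\<close>

definition delta_ring :: "nat \<Rightarrow> ('a::comm_ring_1 \<Rightarrow> 'a) \<Rightarrow> bool" where
  "delta_ring p \<delta> \<longleftrightarrow>
     \<delta> 0 = 0 \<and> \<delta> 1 = 0 \<and>
     (\<forall>x y. \<delta> (x * y) = x ^ p * \<delta> y + y ^ p * \<delta> x + of_nat p * \<delta> x * \<delta> y) \<and>
     (\<forall>x y. \<delta> (x + y) = \<delta> x + \<delta> y
              - (\<Sum>i\<in>{1..p-1}. of_nat ((p choose i) div p) * x ^ i * y ^ (p - i)))"

definition frobenius :: "nat \<Rightarrow> ('a::comm_ring_1 \<Rightarrow> 'a) \<Rightarrow> 'a \<Rightarrow> 'a" where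
  "frobenius p \<delta> x = x ^ p + of_nat p * \<delta> x"

text \<open>Integer polynomials in countably many variables x_0, x_1, ...
  (x_i stands for delta^i(x) in the free delta-ring on one generator x).\<close>

type_synonym ipoly = "(nat \<Rightarrow>\<^sub>0 nat) \<Rightarrow>\<^sub>0 int"

definition Var :: "nat \<Rightarrow> ipoly" where
  "Var i = Poly_Mapping.single (Poly_Mapping.single i 1) 1"

definition eval_ipoly :: "(nat \<Rightarrow> 'a::comm_ring_1) \<Rightarrow> ipoly \<Rightarrow> 'a" where
  "eval_ipoly a P =
     (\<Sum>m\<in>Poly_Mapping.keys P. of_int (Poly_Mapping.lookup P m) *
        (\<Prod>i\<in>Poly_Mapping.keys m. a i ^ Poly_Mapping.lookup m i))"

definition phi_ipoly :: "nat \<Rightarrow> ipoly \<Rightarrow> ipoly" where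
  "phi_ipoly p P = eval_ipoly (\<lambda>i. Var i ^ p + of_nat p * Var (Suc i)) P"

definition div_ipoly :: "int \<Rightarrow> ipoly \<Rightarrow> ipoly" where
  "div_ipoly c P = Poly_Mapping.map (\<lambda>z. z div c) P"

text \<open>Universal polynomials for delta_0, ..., delta_n, from the ghost identity
  phi^n(x) = sum_(k=0..n) p^k delta_k(x)^(p^(n-k)).\<close>
primrec delta_univ_list :: "nat \<Rightarrow> nat \<Rightarrow> ipoly list" where
  "delta_univ_list p 0 = [Var 0]"
| "delta_univ_list p (Suc n) = delta_univ_list p n @
     [div_ipoly (int p ^ Suc n)
        ((phi_ipoly p ^^ Suc n) (Var 0)
         - (\<Sum>k<Suc n. of_nat (p ^ k) * (delta_univ_list p n ! k) ^ (p ^ (Suc n - k))))]"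

definition delta_univ :: "nat \<Rightarrow> nat \<Rightarrow> ipoly" where
  "delta_univ p k = delta_univ_list p k ! k"

text \<open>Universal polynomial for theta_n, from phi(x^(p^(n-1))) = x^(p^n) + p^n theta_n(x).\<close>
definition theta_univ :: "nat \<Rightarrow> nat \<Rightarrow> ipoly" where
  "theta_univ p n = div_ipoly (int p ^ n)
     (phi_ipoly p (Var 0 ^ (p ^ (n - 1))) - Var 0 ^ (p ^ n))"

definition delta_op :: "nat \<Rightarrow> ('a::comm_ring_1 \<Rightarrow> 'a) \<Rightarrow> nat \<Rightarrow> 'a \<Rightarrow> 'a" where
  "delta_op p \<delta> k f = eval_ipoly (\<lambda>i. (\<delta> ^^ i) f) (delta_univ p k)"

definition theta_op :: "nat \<Rightarrow> ('a::comm_ring_1 \<Rightarrow> 'a) \<Rightarrow> nat \<Rightarrow> 'a \<Rightarrow> 'a" where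
  "theta_op p \<delta> n f = eval_ipoly (\<lambda>i. (\<delta> ^^ i) f) (theta_univ p n)"

end

(*
  The identity is proved in the free delta-ring on one generator: integer polynomials in
  x_0, x_1, ... with Frobenius phi x_i = x_i^p + p x_(i+1). There delta P = (phi P - P^p) / p is
  well defined because phi P = P^p mod p, and evaluation at x_i = delta^i f is a map of
  delta-rings, so the identity specialises to every delta-ring. Applying phi to the ghost identity
  phi^n(x) = sum_k p^k delta_k(x)^(p^(n-k)) and using phi(y)^(p^(m-1)) = y^(p^m) + p^m theta_m(y)
  gives p^(n+1) delta_(n+1)(x) = p^(n+1) sum_k theta_(n+1-k)(delta_k(x)); the free delta-ring
  has no p-torsion, so p^(n+1) cancels.
*)

theory Submission
  imports Defs
begin

section \<open>Integer polynomials\<close>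

definition eval_monomial :: "(nat \<Rightarrow> 'a::comm_ring_1) \<Rightarrow> (nat \<Rightarrow>\<^sub>0 nat) \<Rightarrow> 'a" where
  "eval_monomial a m = (\<Prod>i\<in>Poly_Mapping.keys m. a i ^ Poly_Mapping.lookup m i)"

lemma eval_monomial_superset:
  assumes "finite S" "Poly_Mapping.keys m \<subseteq> S"
  shows "eval_monomial a m = (\<Prod>i\<in>S. a i ^ Poly_Mapping.lookup m i)"
  unfolding eval_monomial_def
  by (rule prod.mono_neutral_left[OF assms]) (auto simp: in_keys_iff)

lemma eval_monomial_add: "eval_monomial a (m + n) = eval_monomial a m * eval_monomial a n"
proof -
  let ?S = "Poly_Mapping.keys m \<union> Poly_Mapping.keys n"
  have "eval_monomial a (m + n) = (\<Prod>i\<in>?S. a i ^ Poly_Mapping.lookup (m + n) i)"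
    using keys_add[of m n] by (intro eval_monomial_superset) auto
  also have "\<dots> = (\<Prod>i\<in>?S. a i ^ Poly_Mapping.lookup m i) * (\<Prod>i\<in>?S. a i ^ Poly_Mapping.lookup n i)"
    by (simp add: lookup_add power_add prod.distrib)
  also have "\<dots> = eval_monomial a m * eval_monomial a n"
    by (subst (1 2) eval_monomial_superset[of ?S]) auto
  finally show ?thesis .
qed

lemma eval_monomial_single_1 [simp]: "eval_monomial a (Poly_Mapping.single i 1) = a i"
proof -
  have "Poly_Mapping.keys (Poly_Mapping.single i (1::nat)) = {i}" by simp
  then show ?thesis unfolding eval_monomial_def by simp
qed

lemma eval_ipoly_0 [simp]: "eval_ipoly a 0 = 0"
  by (simp add: eval_ipoly_def)

lemma eval_ipoly_add: "eval_ipoly a (P + Q) = eval_ipoly a P + eval_ipoly a Q"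
  unfolding eval_ipoly_def eval_monomial_def[symmetric]
  by (rule setsum_keys_plus_distrib) (simp_all add: distrib_right)

lemma eval_ipoly_uminus: "eval_ipoly a (- P) = - eval_ipoly a P"
  using eval_ipoly_add[of a P "- P"] by (simp add: add_eq_0_iff)

lemma eval_ipoly_diff: "eval_ipoly a (P - Q) = eval_ipoly a P - eval_ipoly a Q"
  using eval_ipoly_add[of a P "- Q"] by (simp add: eval_ipoly_uminus)

lemma eval_ipoly_sum: "eval_ipoly a (\<Sum>x\<in>I. F x) = (\<Sum>x\<in>I. eval_ipoly a (F x))"
  by (induction I rule: infinite_finite_induct) (auto simp: eval_ipoly_add)

lemma eval_ipoly_single: "eval_ipoly a (Poly_Mapping.single m c) = of_int c * eval_monomial a m"
  by (cases "c = 0") (simp_all add: eval_ipoly_def eval_monomial_def)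

lemma poly_mapping_sum_single:
  "P = (\<Sum>m\<in>Poly_Mapping.keys P. Poly_Mapping.single m (Poly_Mapping.lookup P m))"
  by (rule poly_mapping_eqI) (simp add: lookup_sum lookup_single when_def in_keys_iff)

lemma eval_ipoly_mult: "eval_ipoly a (P * Q) = eval_ipoly a P * eval_ipoly a Q"
proof -
  let ?KP = "Poly_Mapping.keys P" and ?KQ = "Poly_Mapping.keys Q"
  have "P * Q = (\<Sum>m\<in>?KP. Poly_Mapping.single m (Poly_Mapping.lookup P m))
              * (\<Sum>n\<in>?KQ. Poly_Mapping.single n (Poly_Mapping.lookup Q n))"
    by (subst (1) poly_mapping_sum_single, subst (2) poly_mapping_sum_single) (rule refl)
  also have "\<dots> = (\<Sum>m\<in>?KP. \<Sum>n\<in>?KQ.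
      Poly_Mapping.single (m + n) (Poly_Mapping.lookup P m * Poly_Mapping.lookup Q n))"
    by (simp add: sum_product mult_single)
  finally have "eval_ipoly a (P * Q) = (\<Sum>m\<in>?KP. \<Sum>n\<in>?KQ.
      (of_int (Poly_Mapping.lookup P m) * eval_monomial a m) * (of_int (Poly_Mapping.lookup Q n) * eval_monomial a n))"
    by (simp add: eval_ipoly_sum eval_ipoly_single eval_monomial_add mult_ac)
  also have "\<dots> = eval_ipoly a P * eval_ipoly a Q"
    by (simp add: sum_product eval_ipoly_def eval_monomial_def)
  finally show ?thesis .
qed

lemma of_int_ipoly: "(of_int c :: ipoly) = Poly_Mapping.single 0 c"
proof -
  have "Poly_Mapping.single (0::nat \<Rightarrow>\<^sub>0 nat) (of_int c :: int) = of_int c"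
    by (rule single_of_int)
  then show ?thesis by simp
qed

lemma eval_ipoly_of_int [simp]: "eval_ipoly a (of_int c) = of_int c"
  by (simp add: of_int_ipoly eval_ipoly_single eval_monomial_def)

lemma eval_ipoly_of_nat [simp]: "eval_ipoly a (of_nat c) = of_nat c"
  using eval_ipoly_of_int[of a "int c"] by simp

lemma eval_ipoly_1 [simp]: "eval_ipoly a 1 = 1"
  using eval_ipoly_of_int[of a 1] by simp

lemma eval_ipoly_power: "eval_ipoly a (P ^ k) = eval_ipoly a P ^ k"
  by (induction k) (auto simp: eval_ipoly_mult)

lemma eval_ipoly_prod: "eval_ipoly a (\<Prod>x\<in>I. F x) = (\<Prod>x\<in>I. eval_ipoly a (F x))"
  by (induction I rule: infinite_finite_induct) (auto simp: eval_ipoly_mult)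

lemma eval_ipoly_Var [simp]: "eval_ipoly a (Var i) = a i"
  unfolding Var_def eval_ipoly_single eval_monomial_single_1 by simp

lemmas eval_ipoly_hom =
  eval_ipoly_add eval_ipoly_diff eval_ipoly_uminus eval_ipoly_mult eval_ipoly_power
  eval_ipoly_sum eval_ipoly_prod

lemma eval_ipoly_eval_ipoly:
  "eval_ipoly b (eval_ipoly Q P) = eval_ipoly (\<lambda>i. eval_ipoly b (Q i)) P"
  unfolding eval_ipoly_def[of _ P] by (simp only: eval_ipoly_hom eval_ipoly_of_int)

lemma Var_power: "Var i ^ k = Poly_Mapping.single (Poly_Mapping.single i k) 1"
  by (induction k) (simp_all add: Var_def mult_single single_add[symmetric])

lemma prod_single_1:
  "(\<Prod>i\<in>K. Poly_Mapping.single (g i) 1) = (Poly_Mapping.single (\<Sum>i\<in>K. g i) 1 :: ipoly)"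
  by (induction K rule: infinite_finite_induct) (simp_all add: mult_single)

lemma single_eq_of_int_mult_monomial:
  "(Poly_Mapping.single m c :: ipoly) = of_int c * eval_monomial Var m"
proof -
  have "eval_monomial Var m = Poly_Mapping.single
      (\<Sum>i\<in>Poly_Mapping.keys m. Poly_Mapping.single i (Poly_Mapping.lookup m i)) 1"
    unfolding eval_monomial_def Var_power prod_single_1 ..
  also have "\<dots> = Poly_Mapping.single m 1"
    by (simp only: poly_mapping_sum_single[of m, symmetric])
  finally show ?thesis
    by (simp add: of_int_ipoly mult_single)
qed

lemma ipoly_induct [case_names one Var diff mult]:
  assumes one: "Q 1" and Var: "\<And>i. Q (Var i)"
    and diff: "\<And>x y. Q x \<Longrightarrow> Q y \<Longrightarrow> Q (x - y)"
    and mult: "\<And>x y. Q x \<Longrightarrow> Q y \<Longrightarrow> Q (x * y)"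
  shows "Q (P :: ipoly)"
proof -
  have zero: "Q 0"
    using diff[OF one one] by simp
  have add: "Q (x + y)" if "Q x" "Q y" for x y
    using diff[OF \<open>Q x\<close> diff[OF zero \<open>Q y\<close>]] by simp
  have of_nat: "Q (of_nat n)" for n
    by (induction n) (simp_all add: zero one add)
  have of_int: "Q (of_int c)" for c
  proof (cases c rule: int_cases)
    case (nonneg n)
    then show ?thesis using of_nat[of n] by simp
  next
    case (neg n)
    then have "of_int c = 0 - of_nat (Suc n)" by simp
    then show ?thesis using diff[OF zero of_nat] by metis
  qed
  have power: "Q (x ^ k)" if "Q x" for x k
    using that by (induction k) (simp_all add: one mult)
  have prod: "Q (\<Prod>i\<in>K. F i)" if "\<And>i. Q (F i)" for K F
    using that by (induction K rule: infinite_finite_induct) (simp_all add: one mult)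
  have monomial: "Q (eval_monomial Var m)" for m
    unfolding eval_monomial_def by (rule prod) (rule power[OF Var])
  have sum: "Q (\<Sum>i\<in>K. F i)" if "\<And>i. Q (F i)" for K and F :: "_ \<Rightarrow> ipoly"
    using that by (induction K rule: infinite_finite_induct) (simp_all add: zero add)
  show ?thesis
  proof (subst poly_mapping_sum_single, rule sum)
    show "Q (Poly_Mapping.single m (Poly_Mapping.lookup P m))" for m
      unfolding single_eq_of_int_mult_monomial by (rule mult[OF of_int monomial])
  qed
qed

lemma div_ipoly_of_int_mult:
  assumes "c \<noteq> 0"
  shows "div_ipoly c (of_int c * P) = P"
proof (rule poly_mapping_eqI)
  fix k
  have "of_int c * P = Poly_Mapping.map ((*) c) P"
    by (simp add: of_int_ipoly mult_map_scale_conv_mult)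
  then show "Poly_Mapping.lookup (div_ipoly c (of_int c * P)) k = Poly_Mapping.lookup P k"
    using assms by (simp add: div_ipoly_def map.rep_eq when_def)
qed

lemma of_int_mult_div_ipoly:
  assumes "c \<noteq> 0" "of_int c dvd P"
  shows "of_int c * div_ipoly c P = P"
  using assms div_ipoly_of_int_mult by fastforce

section \<open>\<open>p\<close>-th powers\<close>

lemma of_nat_power_dvd_power_diff:
  fixes a b :: "'a::comm_ring_1"
  assumes dvd: "of_nat n ^ j dvd a - b" and "1 \<le> j"
  shows "of_nat n ^ Suc j dvd a ^ n - b ^ n"
proof -
  define S where "S = (\<Sum>i<n. b ^ (n - Suc i) * a ^ i)"
  have "of_nat n dvd (of_nat n :: 'a) ^ j"
    using \<open>1 \<le> j\<close> by (simp add: dvd_power)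
  then have "of_nat n dvd a - b"
    using dvd by (rule dvd_trans)
  then have "of_nat n dvd a ^ i - b ^ i" for i
    by (rule dvd_trans) (simp add: power_diff_sumr2)
  then have "of_nat n dvd (\<Sum>i<n. b ^ (n - Suc i) * (a ^ i - b ^ i))"
    by (simp add: dvd_sum)
  moreover have "(\<Sum>i<n. b ^ (n - Suc i) * b ^ i) = (\<Sum>i<n. b ^ (n - 1))"
    by (intro sum.cong) (auto simp: power_add[symmetric])
  moreover have "S = (\<Sum>i<n. b ^ (n - Suc i) * (a ^ i - b ^ i)) + (\<Sum>i<n. b ^ (n - Suc i) * b ^ i)"
    unfolding S_def sum.distrib[symmetric] by (simp add: algebra_simps)
  ultimately have "of_nat n dvd S"
    by simp
  with dvd have "of_nat n ^ j * of_nat n dvd (a - b) * S"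
    by (rule mult_dvd_mono)
  then show ?thesis
    by (simp add: S_def power_diff_sumr2 mult.commute)
qed

lemma of_nat_dvd_power_power_diff:
  fixes a b :: "'a::comm_ring_1"
  assumes "of_nat p dvd a - b"
  shows "of_nat p ^ Suc m dvd a ^ p ^ m - b ^ p ^ m"
proof (induction m)
  case 0
  then show ?case using assms by simp
next
  case (Suc m)
  have power_Suc_exp: "x ^ p ^ Suc m = (x ^ p ^ m) ^ p" for x :: 'a
    by (simp add: power_mult[symmetric] mult.commute)
  from Suc have "of_nat p ^ Suc (Suc m) dvd (a ^ p ^ m) ^ p - (b ^ p ^ m) ^ p"
    by (intro of_nat_power_dvd_power_diff) auto
  then show ?case
    by (simp only: power_Suc_exp)
qed

definition binom_cross :: "nat \<Rightarrow> 'a::comm_ring_1 \<Rightarrow> 'a \<Rightarrow> 'a" where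
  "binom_cross p x y = (\<Sum>i\<in>{1..p-1}. of_nat ((p choose i) div p) * x ^ i * y ^ (p - i))"

lemma add_power_prime:
  fixes x y :: "'a::comm_ring_1"
  assumes "prime p"
  shows "(x + y) ^ p = x ^ p + y ^ p + of_nat p * binom_cross p x y"
proof -
  have "p \<ge> 2"
    using assms by (rule prime_ge_2_nat)
  have inner: "of_nat (p choose i) * x ^ i * y ^ (p - i)
      = of_nat p * (of_nat ((p choose i) div p) * x ^ i * y ^ (p - i))" if "i \<in> {1..p-1}" for i
  proof -
    have "p dvd p choose i"
      using that \<open>p \<ge> 2\<close> assms by (intro dvd_choose_prime) auto
    then have "(of_nat (p choose i) :: 'a) = of_nat p * of_nat ((p choose i) div p)"
      by (metis dvd_mult_div_cancel of_nat_mult)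
    then show ?thesis
      by (simp add: mult_ac)
  qed
  have "{..p} = insert 0 (insert p {1..p-1})"
    using \<open>p \<ge> 2\<close> by auto
  then have "(x + y) ^ p = y ^ p + x ^ p + (\<Sum>i\<in>{1..p-1}. of_nat (p choose i) * x ^ i * y ^ (p - i))"
    using \<open>p \<ge> 2\<close> by (simp add: binomial_ring)
  also have "\<dots> = x ^ p + y ^ p + of_nat p * binom_cross p x y"
    by (simp add: binom_cross_def sum_distrib_left inner)
  finally show ?thesis .
qed

lemma delta_ring_diff:
  assumes "delta_ring p \<delta>"
  shows "\<delta> (x - y) = \<delta> x - \<delta> y + binom_cross p (x - y) y"
proof -
  have "\<delta> x = \<delta> ((x - y) + y)"
    by simp
  also have "\<dots> = \<delta> (x - y) + \<delta> y - binom_cross p (x - y) y"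
    using assms unfolding delta_ring_def binom_cross_def by blast
  finally show ?thesis
    by (simp add: algebra_simps)
qed

lemma eval_ipoly_binom_cross:
  "eval_ipoly a (binom_cross p x y) = binom_cross p (eval_ipoly a x) (eval_ipoly a y)"
  by (simp add: binom_cross_def eval_ipoly_hom)

section \<open>The free delta-ring on one generator\<close>

lemma phi_ipoly_diff: "phi_ipoly p (P - Q) = phi_ipoly p P - phi_ipoly p Q"
  by (simp add: phi_ipoly_def eval_ipoly_diff)

lemma phi_ipoly_mult: "phi_ipoly p (P * Q) = phi_ipoly p P * phi_ipoly p Q"
  by (simp add: phi_ipoly_def eval_ipoly_mult)

lemma phi_ipoly_power: "phi_ipoly p (P ^ k) = phi_ipoly p P ^ k"
  by (simp add: phi_ipoly_def eval_ipoly_power)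

lemma phi_ipoly_sum: "phi_ipoly p (\<Sum>i\<in>I. F i) = (\<Sum>i\<in>I. phi_ipoly p (F i))"
  by (simp add: phi_ipoly_def eval_ipoly_sum)

lemma phi_ipoly_of_nat [simp]: "phi_ipoly p (of_nat n) = of_nat n"
  by (simp add: phi_ipoly_def)

lemma phi_ipoly_Var: "phi_ipoly p (Var i) = Var i ^ p + of_nat p * Var (Suc i)"
  by (simp add: phi_ipoly_def)

lemma of_nat_dvd_phi_ipoly_diff_power:
  assumes "prime p"
  shows "of_nat p dvd phi_ipoly p P - P ^ p"
proof (induction P rule: ipoly_induct)
  case one
  then show ?case
    using phi_ipoly_of_nat[of p 1] by simp
next
  case (Var i)
  then show ?case
    by (simp add: phi_ipoly_Var)
next
  case (diff x y)
  have "phi_ipoly p (x - y) - (x - y) ^ p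
      = (phi_ipoly p x - x ^ p) - (phi_ipoly p y - y ^ p) + of_nat p * binom_cross p (x - y) y"
    using add_power_prime[OF assms, of "x - y" y] by (simp add: phi_ipoly_diff algebra_simps)
  with diff show ?case
    by (simp add: dvd_add dvd_diff)
next
  case (mult x y)
  have "phi_ipoly p (x * y) - (x * y) ^ p
      = (phi_ipoly p x - x ^ p) * phi_ipoly p y + x ^ p * (phi_ipoly p y - y ^ p)"
    by (simp add: phi_ipoly_mult power_mult_distrib algebra_simps)
  with mult show ?case
    by (simp add: dvd_add)
qed

definition delta_ipoly :: "nat \<Rightarrow> ipoly \<Rightarrow> ipoly" where
  "delta_ipoly p P = div_ipoly (int p) (phi_ipoly p P - P ^ p)"

lemma phi_ipoly_eq_frobenius:
  assumes "prime p"
  shows "phi_ipoly p P = frobenius p (delta_ipoly p) P"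
proof -
  have "of_int (int p) * delta_ipoly p P = phi_ipoly p P - P ^ p"
    unfolding delta_ipoly_def using assms of_nat_dvd_phi_ipoly_diff_power[OF assms]
    by (intro of_int_mult_div_ipoly) auto
  then show ?thesis
    by (simp add: frobenius_def)
qed

lemma delta_ipoly_eqI:
  assumes "prime p" and "phi_ipoly p P = P ^ p + of_nat p * D"
  shows "delta_ipoly p P = D"
proof -
  have "p \<noteq> 0"
    using assms(1) by auto
  then show ?thesis
    using phi_ipoly_eq_frobenius[OF assms(1), of P] assms(2) by (auto simp: frobenius_def)
qed

lemma delta_ipoly_1: "prime p \<Longrightarrow> delta_ipoly p 1 = 0"
  using phi_ipoly_of_nat[of p 1] by (intro delta_ipoly_eqI) simp_all

lemma delta_ipoly_Var: "prime p \<Longrightarrow> delta_ipoly p (Var i) = Var (Suc i)"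
  by (rule delta_ipoly_eqI) (simp_all add: phi_ipoly_Var)

lemma delta_ipoly_diff:
  assumes "prime p"
  shows "delta_ipoly p (x - y) = delta_ipoly p x - delta_ipoly p y + binom_cross p (x - y) y"
proof (rule delta_ipoly_eqI[OF assms])
  have "x ^ p = (x - y) ^ p + y ^ p + of_nat p * binom_cross p (x - y) y"
    using add_power_prime[OF assms, of "x - y" y] by simp
  then show "phi_ipoly p (x - y) = (x - y) ^ p
      + of_nat p * (delta_ipoly p x - delta_ipoly p y + binom_cross p (x - y) y)"
    by (simp add: phi_ipoly_diff phi_ipoly_eq_frobenius[OF assms] frobenius_def algebra_simps)
qed

lemma delta_ipoly_mult:
  assumes "prime p"
  shows "delta_ipoly p (x * y)
    = x ^ p * delta_ipoly p y + y ^ p * delta_ipoly p x + of_nat p * delta_ipoly p x * delta_ipoly p y"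
  by (rule delta_ipoly_eqI[OF assms])
     (simp add: phi_ipoly_mult phi_ipoly_eq_frobenius[OF assms] frobenius_def
       algebra_simps power_mult_distrib)

lemma eval_ipoly_delta_ipoly:
  assumes "prime p" and "delta_ring p \<delta>"
  shows "eval_ipoly (\<lambda>i. (\<delta> ^^ i) f) (delta_ipoly p P) = \<delta> (eval_ipoly (\<lambda>i. (\<delta> ^^ i) f) P)"
proof (induction P rule: ipoly_induct)
  case one
  then show ?case
    using assms by (simp add: delta_ipoly_1 delta_ring_def)
next
  case (Var i)
  then show ?case
    using assms by (simp add: delta_ipoly_Var)
next
  case (diff x y)
  then show ?case
    using assms by (simp add: delta_ipoly_diff delta_ring_diff eval_ipoly_diff eval_ipoly_add
        eval_ipoly_binom_cross)
next
  case (mult x y)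
  then show ?case
    using assms by (simp add: delta_ipoly_mult delta_ring_def eval_ipoly_add eval_ipoly_mult
        eval_ipoly_power)
qed

lemma eval_ipoly_funpow_delta_ipoly:
  assumes "prime p" and "delta_ring p \<delta>"
  shows "eval_ipoly (\<lambda>i. (\<delta> ^^ i) f) ((delta_ipoly p ^^ k) P)
    = (\<delta> ^^ k) (eval_ipoly (\<lambda>i. (\<delta> ^^ i) f) P)"
  by (induction k) (simp_all add: eval_ipoly_delta_ipoly[OF assms])

lemma eval_ipoly_theta_op_delta_ipoly:
  assumes "prime p" and "delta_ring p \<delta>"
  shows "eval_ipoly (\<lambda>i. (\<delta> ^^ i) f) (theta_op p (delta_ipoly p) m Q)
    = theta_op p \<delta> m (eval_ipoly (\<lambda>i. (\<delta> ^^ i) f) Q)"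
  unfolding theta_op_def eval_ipoly_eval_ipoly eval_ipoly_funpow_delta_ipoly[OF assms] ..

section \<open>Ghost components\<close>

lemma theta_univ_spec:
  assumes "0 < p" and "1 \<le> m"
  shows "of_nat p ^ m * theta_univ p m
    = (Var 0 ^ p + of_nat p * Var 1) ^ p ^ (m - 1) - Var 0 ^ p ^ m"
proof -
  have "p ^ m = p * p ^ (m - 1)"
    using \<open>1 \<le> m\<close> by (metis Suc_diff_le diff_Suc_1 power_Suc)
  then have Var_0_power: "Var 0 ^ p ^ m = (Var 0 ^ p) ^ p ^ (m - 1)"
    by (simp add: power_mult)
  have "of_nat p ^ m dvd (Var 0 ^ p + of_nat p * Var 1) ^ p ^ (m - 1) - (Var 0 ^ p) ^ p ^ (m - 1)"
    using of_nat_dvd_power_power_diff[of p "Var 0 ^ p + of_nat p * Var 1" "Var 0 ^ p" "m - 1"]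
      \<open>1 \<le> m\<close> by simp
  then have "of_int (int p ^ m) * div_ipoly (int p ^ m)
      ((Var 0 ^ p + of_nat p * Var 1) ^ p ^ (m - 1) - (Var 0 ^ p) ^ p ^ (m - 1))
      = (Var 0 ^ p + of_nat p * Var 1) ^ p ^ (m - 1) - (Var 0 ^ p) ^ p ^ (m - 1)"
    using \<open>0 < p\<close> by (intro of_int_mult_div_ipoly) simp_all
  moreover have "phi_ipoly p (Var 0 ^ p ^ (m - 1)) = (Var 0 ^ p + of_nat p * Var 1) ^ p ^ (m - 1)"
    by (simp add: phi_ipoly_power phi_ipoly_Var)
  ultimately show ?thesis
    unfolding theta_univ_def Var_0_power by simp
qed

lemma theta_op_spec:
  fixes \<delta> :: "'a::comm_ring_1 \<Rightarrow> 'a"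
  assumes "0 < p" and "1 \<le> m"
  shows "of_nat p ^ m * theta_op p \<delta> m f = frobenius p \<delta> f ^ p ^ (m - 1) - f ^ p ^ m"
  using arg_cong[OF theta_univ_spec[OF assms], of "eval_ipoly (\<lambda>i. (\<delta> ^^ i) f)"]
  by (simp add: theta_op_def frobenius_def eval_ipoly_hom)

lemma phi_ipoly_ghost_sum:
  assumes "prime p"
  shows "phi_ipoly p (\<Sum>k\<le>n. of_nat (p ^ k) * Q k ^ p ^ (n - k))
    = (\<Sum>k\<le>n. of_nat (p ^ k) * Q k ^ p ^ (Suc n - k))
      + of_nat p ^ Suc n * (\<Sum>k\<le>n. theta_op p (delta_ipoly p) (Suc n - k) (Q k))"
proof -
  have summand: "of_nat (p ^ k) * phi_ipoly p (Q k) ^ p ^ (n - k)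
      = of_nat (p ^ k) * Q k ^ p ^ (Suc n - k)
        + of_nat p ^ Suc n * theta_op p (delta_ipoly p) (Suc n - k) (Q k)" if "k \<le> n" for k
  proof -
    have "of_nat p ^ Suc n * theta_op p (delta_ipoly p) (Suc n - k) (Q k)
        = of_nat (p ^ k) * (of_nat p ^ (Suc n - k) * theta_op p (delta_ipoly p) (Suc n - k) (Q k))"
      using that by (simp add: power_add[symmetric] mult.assoc)
    also have "\<dots> = of_nat (p ^ k) * (phi_ipoly p (Q k) ^ p ^ (n - k) - Q k ^ p ^ (Suc n - k))"
      using theta_op_spec[of p "Suc n - k" "delta_ipoly p" "Q k"] prime_gt_0_nat[OF assms] that
      by (simp add: phi_ipoly_eq_frobenius[OF assms] Suc_diff_le)
    finally show ?thesis
      by (simp add: algebra_simps)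
  qed
  have "phi_ipoly p (\<Sum>k\<le>n. of_nat (p ^ k) * Q k ^ p ^ (n - k))
      = (\<Sum>k\<le>n. of_nat (p ^ k) * phi_ipoly p (Q k) ^ p ^ (n - k))"
    by (simp add: phi_ipoly_sum phi_ipoly_mult phi_ipoly_power)
  also have "\<dots> = (\<Sum>k\<le>n. of_nat (p ^ k) * Q k ^ p ^ (Suc n - k)
      + of_nat p ^ Suc n * theta_op p (delta_ipoly p) (Suc n - k) (Q k))"
    by (rule sum.cong[OF refl], rule summand) simp
  finally show ?thesis
    by (simp add: sum.distrib sum_distrib_left)
qed

lemma length_delta_univ_list: "length (delta_univ_list p n) = Suc n"
  by (induction n) simp_all

lemma nth_delta_univ_list: "k \<le> n \<Longrightarrow> delta_univ_list p n ! k = delta_univ p k"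
proof (induction n)
  case 0
  then show ?case by (simp add: delta_univ_def)
next
  case (Suc n)
  then show ?case
    by (cases "k = Suc n") (simp_all add: delta_univ_def nth_append length_delta_univ_list)
qed

lemma delta_univ_Suc:
  "delta_univ p (Suc n) = div_ipoly (int p ^ Suc n)
     ((phi_ipoly p ^^ Suc n) (Var 0) - (\<Sum>k\<le>n. of_nat (p ^ k) * delta_univ p k ^ p ^ (Suc n - k)))"
proof -
  have "(\<Sum>k<Suc n. of_nat (p ^ k) * (delta_univ_list p n ! k) ^ p ^ (Suc n - k))
      = (\<Sum>k\<le>n. of_nat (p ^ k) * delta_univ p k ^ p ^ (Suc n - k))"
    unfolding lessThan_Suc_atMost by (rule sum.cong) (simp_all add: nth_delta_univ_list)
  then show ?thesis
    by (simp add: delta_univ_def[of p "Suc n"] nth_append length_delta_univ_list)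
qed

lemma delta_univ_Suc_eq_sum_theta:
  assumes "prime p"
    and ghost: "(phi_ipoly p ^^ n) (Var 0) = (\<Sum>k\<le>n. of_nat (p ^ k) * delta_univ p k ^ p ^ (n - k))"
  shows "delta_univ p (Suc n) = (\<Sum>k\<le>n. theta_op p (delta_ipoly p) (Suc n - k) (delta_univ p k))"
proof -
  have "(phi_ipoly p ^^ Suc n) (Var 0) - (\<Sum>k\<le>n. of_nat (p ^ k) * delta_univ p k ^ p ^ (Suc n - k))
      = of_int (int p ^ Suc n) * (\<Sum>k\<le>n. theta_op p (delta_ipoly p) (Suc n - k) (delta_univ p k))"
    using phi_ipoly_ghost_sum[OF assms(1), where n=n and Q="delta_univ p"] ghost by simp
  moreover have "int p ^ Suc n \<noteq> 0"
    using assms(1) by auto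
  ultimately show ?thesis
    unfolding delta_univ_Suc by (metis div_ipoly_of_int_mult)
qed

lemma ghost_identity_delta_univ:
  assumes "prime p"
  shows "(phi_ipoly p ^^ n) (Var 0) = (\<Sum>k\<le>n. of_nat (p ^ k) * delta_univ p k ^ p ^ (n - k))"
proof (induction n)
  case 0
  then show ?case by (simp add: delta_univ_def)
next
  case (Suc n)
  have "(phi_ipoly p ^^ Suc n) (Var 0)
      = (\<Sum>k\<le>n. of_nat (p ^ k) * delta_univ p k ^ p ^ (Suc n - k))
        + of_nat p ^ Suc n * delta_univ p (Suc n)"
    using phi_ipoly_ghost_sum[OF assms, where n=n and Q="delta_univ p"]
    by (simp add: Suc.IH delta_univ_Suc_eq_sum_theta[OF assms Suc.IH])
  then show ?case
    by simp
qed

lemma delta_univ_eq_sum_theta: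
  assumes "prime p" and "1 \<le> n"
  shows "delta_univ p n = (\<Sum>k<n. theta_op p (delta_ipoly p) (n - k) (delta_univ p k))"
proof -
  obtain m where "n = Suc m"
    using \<open>1 \<le> n\<close> by (cases n) auto
  then show ?thesis
    using delta_univ_Suc_eq_sum_theta[OF assms(1) ghost_identity_delta_univ[OF assms(1)]]
    by (simp add: lessThan_Suc_atMost)
qed

theorem lemma4p15:
  fixes p :: nat and \<delta> :: "'a::comm_ring_1 \<Rightarrow> 'a" and n :: nat and f :: 'a
  assumes "prime p" and "delta_ring p \<delta>" and "n \<ge> 1"
  shows "delta_op p \<delta> n f = (\<Sum>k=0..n-1. theta_op p \<delta> (n - k) (delta_op p \<delta> k f))"
proof -
  let ?eval = "eval_ipoly (\<lambda>i. (\<delta> ^^ i) f)"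
  have "delta_op p \<delta> n f = ?eval (delta_univ p n)"
    by (simp add: delta_op_def)
  also have "\<dots> = (\<Sum>k<n. ?eval (theta_op p (delta_ipoly p) (n - k) (delta_univ p k)))"
    by (subst delta_univ_eq_sum_theta[OF assms(1,3)]) (rule eval_ipoly_sum)
  also have "\<dots> = (\<Sum>k<n. theta_op p \<delta> (n - k) (delta_op p \<delta> k f))"
    by (simp add: eval_ipoly_theta_op_delta_ipoly[OF assms(1,2)] delta_op_def)
  also have "{..<n} = {0..n-1}"
    using \<open>n \<ge> 1\<close> by auto
  finally show ?thesis .
qed

end
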